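(* Let $F$ be a Hecke--Maa\ss{} cusp form for $\mathrm{SL}_3(\mathbb{Z})$ with Hecke eigenvalues $A_F(m,n)$, and let $\Xi_F$ be as defined below and, for $c\in\mathbb{N}$, $d\in(\mathbb{Z}/c\mathbb{Z})^\times$, $\Re(w)<0$, \[\Xi(c,\pm d;-w) \coloneqq c^{-w} \sum_{b \in \mathbb{Z}/c\mathbb{Z}} e\Big(\pm \frac{bd}{c}\Big) \sum_{m = 1}^{\infty} \frac{e(\frac{bm}{c})}{m^{1 - w}}.\] For $\ell\in\mathbb{N}$, $w_1=u_1+iv_1$, $w_2=u_2+iv_2$ with $u_1,u_2<0$, and any signs $\pm_1,\pm_2$, \[\sum_{c \mid \ell} c^{2w_2 - 1} \sum_{d \in (\mathbb{Z}/c\mathbb{Z})^{\times}} \Xi(c,\pm_1 d;-w_1) \Xi_F\Big(c,\pm_2 d,\frac{\ell}{c};-w_2\Big) = \ell^{1 - w_1 - w_2} \sum_{n_1 \mid \ell} \sum_{m,n_2 = 1}^{\infty} \frac{A_F(n_2,n_1)}{m^{1 - w_1} n_2^{1 - w_2} n_1^{1 - 2w_2}} S\Big(m, \mp_1 \pm_2 n_2; \frac{\ell}{n_1}\Big).\]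
   Context: $e(x)=e^{2\pi ix}$, $S(m,n;c)$ is the Kloosterman sum. For $c,\ell\in\mathbb{N}$, $d\in(\mathbb{Z}/c\mathbb{Z})^\times$, $\Re(w)<0$: $\Xi_F(c,\pm d,\ell;-w) \coloneqq c \sum_{n_1 \mid c\ell} \sum_{n_2 \ge1} \frac{A_F(n_2,n_1)}{n_2 n_1} S(d\ell,\pm n_2; \frac{c\ell}{n_1}) (\frac{n_2 n_1^2}{c^3 \ell})^w$. The sign $\mp_1\pm_2$ denotes the product of $-(\pm_1 1)$ and $(\pm_2 1)$. *)

theory Defs
  imports "HOL-Analysis.Analysis" "HOL-Number_Theory.Number_Theory"
begin

definition ee :: "real \<Rightarrow> complex" where
  "ee x = exp (2 * of_real pi * \<i> * of_real x)"

definition modinv :: "nat \<Rightarrow> int \<Rightarrow> int" where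
  "modinv c x = (SOME y. 0 \<le> y \<and> y < int c \<and> [x * y = 1] (mod int c))"

definition units_mod :: "nat \<Rightarrow> int set" where
  "units_mod c = {x. 0 \<le> x \<and> x < int c \<and> coprime x (int c)}"

definition kloosterman :: "int \<Rightarrow> int \<Rightarrow> nat \<Rightarrow> complex" where
  "kloosterman m n c =
     (\<Sum>x\<in>units_mod c. ee ((real_of_int (m * x + n * modinv c x)) / real c))"

definition cpow :: "real \<Rightarrow> complex \<Rightarrow> complex" where
  "cpow x w = complex_of_real x powr w"

text \<open>Xi c s d w is  \<Xi>(c, s d; -w)  (s = +1 or -1 the sign):
  c^{-w} sum_{b mod c} e(s b d / c) sum_{m>=1} e(b m / c) / m^{1-w}.\<close>
definition Xi :: "nat \<Rightarrow> int \<Rightarrow> int \<Rightarrow> complex \<Rightarrow> complex" where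
  "Xi c s d w = cpow (real c) (- w) *
     (\<Sum>b<c. ee (real_of_int (s * int b * d) / real c) *
        infsum (\<lambda>m::nat. ee (real (b * m) / real c) / cpow (real m) (1 - w)) {1..})"

text \<open>XiF A c s d l w is  \<Xi>_F(c, s d, l; -w):
  c sum_{n1 | c l} sum_{n2>=1} A(n2,n1)/(n2 n1) S(d l, s n2; c l / n1) (n2 n1^2/(c^3 l))^w.\<close>
definition XiF :: "(nat \<Rightarrow> nat \<Rightarrow> complex) \<Rightarrow> nat \<Rightarrow> int \<Rightarrow> int \<Rightarrow> nat \<Rightarrow> complex \<Rightarrow> complex" where
  "XiF A c s d l w = of_nat c *
     (\<Sum>n1 | n1 dvd c * l.
        infsum (\<lambda>n2::nat. A n2 n1 / of_nat (n2 * n1) *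
             kloosterman (d * int l) (s * int n2) (c * l div n1) *
             cpow (real (n2 * n1^2) / real (c^3 * l)) w) {1..})"

end

theory Submission
  imports Defs
begin

text \<open>
  Orthogonality of additive characters turns \<open>\<Xi>(c, \<plusminus>\<^sub>1d; -w\<^sub>1)\<close> into \<open>c^(1-w\<^sub>1)\<close> times
  the Dirichlet series of \<open>m^(w\<^sub>1-1)\<close> over the \<open>m \<equiv> \<minusplus>\<^sub>1d (mod c)\<close>. For such \<open>m\<close> the
  Kloosterman sums in \<open>\<Xi>\<^sub>F\<close> see \<open>d\<close> only through \<open>d \<equiv> \<minusplus>\<^sub>1m\<close>, so the sum over the units
  \<open>d\<close> modulo \<open>c\<close> merely restricts to the \<open>m\<close> coprime to \<open>c\<close>. The powers of \<open>c\<close> then combine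
  into \<open>l^(1-w\<^sub>1-w\<^sub>2)\<close>, and after the substitution \<open>M = m l/c\<close> every \<open>M \<ge> 1\<close> arises from
  exactly one divisor \<open>c\<close> of \<open>l\<close>, namely \<open>c = l / gcd M l\<close>. For \<open>Re w\<^sub>1, Re w\<^sub>2 < 0\<close> all
  series converge absolutely, which justifies every interchange of summation.
\<close>

section \<open>Additive characters and complex powers\<close>

lemma ee_add: "ee (x + y) = ee x * ee y"
  by (simp add: ee_def distrib_left exp_add)

lemma ee_of_int: "ee (real_of_int k) = 1"
proof -
  have "ee (real_of_int k) = exp ((2 * of_int k * of_real pi) * \<i>)"
    by (simp add: ee_def mult_ac)
  also have "\<dots> = 1"
    unfolding exp_eq_1 by (simp add: exI[of _ k])
  finally show ?thesis .
qed

lemma norm_ee [simp]: "norm (ee x) = 1"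
  by (simp add: ee_def norm_exp_eq_Re)

lemma ee_of_nat_mult: "ee (real n * x) = ee x ^ n"
  by (simp add: ee_def exp_of_nat_mult[symmetric] mult_ac)

lemma ee_cong:
  assumes "q > 0" "[u = v] (mod int q)"
  shows "ee (real_of_int u / real q) = ee (real_of_int v / real q)"
proof -
  obtain k where k: "u = v + int q * k"
    using assms(2) by (metis cong_iff_lin cong_sym)
  have "real_of_int u / real q = real_of_int v / real q + real_of_int k"
    using assms(1) by (simp add: k field_simps)
  then show ?thesis
    by (simp add: ee_add ee_of_int)
qed

lemma sum_ee_orthogonality:
  assumes c: "c > 0"
  shows "(\<Sum>b<c. ee (real_of_int (int b * k) / real c)) = (if int c dvd k then of_nat c else 0)"
proof -
  define z where "z = ee (real_of_int k / real c)"
  have powers: "ee (real_of_int (int b * k) / real c) = z ^ b" for b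
    unfolding z_def by (simp flip: ee_of_nat_mult)
  have "z ^ c = 1"
    unfolding z_def using c by (simp flip: ee_of_nat_mult add: ee_of_int)
  moreover have "z = 1 \<longleftrightarrow> int c dvd k"
  proof
    assume "z = 1"
    then obtain n :: int where "2 * pi * (real_of_int k / real c) = of_int (2 * n) * pi"
      unfolding z_def ee_def exp_eq_1 by auto
    then have "real_of_int k = real_of_int (n * int c)"
      using c by (simp add: field_simps)
    then show "int c dvd k"
      by (metis dvd_triv_right of_int_eq_iff)
  next
    assume "int c dvd k"
    then obtain j where "k = int c * j" by blast
    then show "z = 1"
      unfolding z_def using c by (simp add: ee_of_int)
  qed
  ultimately show ?thesis
    unfolding powers by (simp add: sum_gp_strict)
qed

lemma cpow_exp: "x > 0 \<Longrightarrow> cpow x w = exp (w * of_real (ln x))"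
  by (simp add: cpow_def powr_def Ln_of_real)

lemma norm_cpow: "x > 0 \<Longrightarrow> norm (cpow x w) = x powr Re w"
  by (simp add: cpow_def norm_powr_real_powr)

lemma cpow_add_one: "x > 0 \<Longrightarrow> cpow x (w + 1) = cpow x w * of_real x"
  by (simp add: cpow_exp distrib_right exp_add flip: of_real_exp)

lemma cpow_monomial_identity:
  fixes c k m n1 n2 :: real
  assumes pos: "c > 0" "k > 0" "m > 0" "n1 > 0" "n2 > 0"
  shows "cpow c (2 * w2 - 1) * (cpow c (1 - w1) / cpow m (1 - w1)) * of_real c *
           (a / of_real (n2 * n1) * cpow (n2 * n1 ^ 2 / (c ^ 3 * k)) w2) =
         cpow (c * k) (1 - w1 - w2) *
           (a / (cpow (m * k) (1 - w1) * cpow n2 (1 - w2) * cpow n1 (1 - 2 * w2)))"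
proof -
  define Lc where "Lc = (of_real (ln c) :: complex)"
  define Lk where "Lk = (of_real (ln k) :: complex)"
  define Lm where "Lm = (of_real (ln m) :: complex)"
  define L1 where "L1 = (of_real (ln n1) :: complex)"
  define L2 where "L2 = (of_real (ln n2) :: complex)"
  have e1: "cpow (n2 * n1 ^ 2 / (c ^ 3 * k)) w2 = exp (w2 * (L2 + 2 * L1 - 3 * Lc - Lk))"
    using pos by (simp add: cpow_exp ln_mult ln_div ln_realpow Lc_def Lk_def L1_def L2_def diff_diff_eq)
  have e2: "(of_real (n2 * n1) :: complex) = exp (L2 + L1)" "(of_real c :: complex) = exp Lc"
    using pos by (simp_all add: ln_mult_pos exp_add L1_def L2_def Lc_def flip: of_real_exp)
  have "cpow c (2 * w2 - 1) * (cpow c (1 - w1) / cpow m (1 - w1)) * of_real c *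
           (a / of_real (n2 * n1) * cpow (n2 * n1 ^ 2 / (c ^ 3 * k)) w2)
      = a * (exp ((2 * w2 - 1) * Lc) * exp ((1 - w1) * Lc) * exp Lc * exp (w2 * (L2 + 2 * L1 - 3 * Lc - Lk))
            / (exp ((1 - w1) * Lm) * exp (L2 + L1)))"
    unfolding e1 e2 using pos by (simp add: cpow_exp Lc_def Lm_def)
  also have "exp ((2 * w2 - 1) * Lc) * exp ((1 - w1) * Lc) * exp Lc * exp (w2 * (L2 + 2 * L1 - 3 * Lc - Lk))
            / (exp ((1 - w1) * Lm) * exp (L2 + L1)) =
        exp ((2 * w2 - 1) * Lc + (1 - w1) * Lc + Lc + w2 * (L2 + 2 * L1 - 3 * Lc - Lk) - ((1 - w1) * Lm + (L2 + L1)))"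
    by (simp only: exp_add exp_diff)
  also have "(2 * w2 - 1) * Lc + (1 - w1) * Lc + Lc + w2 * (L2 + 2 * L1 - 3 * Lc - Lk) - ((1 - w1) * Lm + (L2 + L1))
      = (1 - w1 - w2) * (Lc + Lk) - ((1 - w1) * (Lm + Lk) + (1 - w2) * L2 + (1 - 2 * w2) * L1)"
    by (simp add: algebra_simps)
  also have "a * exp ((1 - w1 - w2) * (Lc + Lk) - ((1 - w1) * (Lm + Lk) + (1 - w2) * L2 + (1 - 2 * w2) * L1))
      = exp ((1 - w1 - w2) * (Lc + Lk)) * (a / (exp ((1 - w1) * (Lm + Lk)) * exp ((1 - w2) * L2) * exp ((1 - 2 * w2) * L1)))"
    by (simp add: exp_diff exp_add)
  also have "\<dots> = cpow (c * k) (1 - w1 - w2) *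
           (a / (cpow (m * k) (1 - w1) * cpow n2 (1 - w2) * cpow n1 (1 - 2 * w2)))"
    using pos by (simp add: cpow_exp ln_mult Lc_def Lk_def Lm_def L1_def L2_def)
  finally show ?thesis .
qed

section \<open>Unconditional sums\<close>

lemma has_sum_sum:
  fixes f :: "'i \<Rightarrow> 'a \<Rightarrow> 'b::topological_comm_monoid_add"
  assumes "finite I" "\<And>i. i \<in> I \<Longrightarrow> (f i has_sum s i) A"
  shows "((\<lambda>x. \<Sum>i\<in>I. f i x) has_sum (\<Sum>i\<in>I. s i)) A"
  using assms
proof (induction I rule: finite_induct)
  case (insert i I)
  then have "((\<lambda>x. f i x + (\<Sum>j\<in>I. f j x)) has_sum s i + (\<Sum>j\<in>I. s j)) A"
    by (intro has_sum_add) auto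
  with insert show ?case
    by simp
qed simp

lemma summable_on_norm_bound:
  fixes f :: "'a \<Rightarrow> 'b::banach"
  assumes "g summable_on A" "\<And>x. x \<in> A \<Longrightarrow> norm (f x) \<le> g x"
  shows "f summable_on A"
  by (rule Infinite_Sum.abs_summable_summable, rule Infinite_Sum.abs_summable_on_comparison_test'[OF assms])

lemma summable_on_powr_nat:
  assumes "\<sigma> > 1"
  shows "(\<lambda>n::nat. C * real n powr - \<sigma>) summable_on B"
proof -
  have "summable (\<lambda>n::nat. norm (real n powr - \<sigma>))"
    using assms by (simp add: summable_real_powr_iff)
  then have "(\<lambda>n::nat. real n powr - \<sigma>) summable_on UNIV"
    by (rule norm_summable_imp_summable_on)
  then have "(\<lambda>n::nat. real n powr - \<sigma>) summable_on B"
    by (rule summable_on_subset_banach) simp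
  then show ?thesis
    by (rule summable_on_cmult_right)
qed

lemma summable_on_product_nonneg:
  fixes f g :: "_ \<Rightarrow> real"
  assumes "f summable_on A" "g summable_on B" "\<And>x. x \<in> A \<Longrightarrow> f x \<ge> 0" "\<And>y. y \<in> B \<Longrightarrow> g y \<ge> 0"
  shows "(\<lambda>(x, y). f x * g y) summable_on (A \<times> B)"
proof (rule summable_on_SigmaI[where g="\<lambda>x. f x * infsum g B"])
  show "(\<lambda>x. f x * infsum g B) summable_on A"
    using assms(1) by (rule summable_on_cmult_left)
  show "((\<lambda>y. (\<lambda>(x, y). f x * g y) (x, y)) has_sum f x * infsum g B) B" for x
    using assms(2) by (simp add: has_sum_cmult_right)
  show "0 \<le> (\<lambda>(x, y). f x * g y) (x, y)" if "x \<in> A" "y \<in> B" for x y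
    using that by (simp add: assms)
qed

lemma summable_on_div_cpow:
  assumes "Re w < 0" "\<And>m. m \<ge> 1 \<Longrightarrow> norm (z m) \<le> C"
  shows "(\<lambda>m::nat. z m / cpow (real m) (1 - w)) summable_on {1..}"
proof (rule summable_on_norm_bound)
  show "(\<lambda>m::nat. C * real m powr (Re w - 1)) summable_on {1..}"
    using summable_on_powr_nat[of "1 - Re w"] assms(1) by simp
  fix m :: nat
  assume m: "m \<in> {1..}"
  then have "norm (z m / cpow (real m) (1 - w)) = norm (z m) * real m powr (Re w - 1)"
    using powr_minus[of "real m" "1 - Re w"] by (simp add: norm_mult norm_inverse norm_cpow divide_inverse)
  also have "\<dots> \<le> C * real m powr (Re w - 1)"
    using assms(2) m by (intro mult_right_mono) auto
  finally show "norm (z m / cpow (real m) (1 - w)) \<le> C * real m powr (Re w - 1)" .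
qed

section \<open>Kloosterman sums\<close>

lemma modinv_cong:
  assumes "q > 0" "coprime x (int q)"
  shows "[x * modinv q x = 1] (mod int q)"
proof -
  obtain y where y: "[x * y = 1] (mod int q)"
    using cong_solve_coprime_int[OF assms(2)] by blast
  have "[x * (y mod int q) = x * y] (mod int q)"
    by (intro cong_mult cong_refl) (simp add: cong_def)
  then have "[x * (y mod int q) = 1] (mod int q)"
    using y by (rule cong_trans)
  moreover have "0 \<le> y mod int q" "y mod int q < int q"
    using assms(1) by auto
  ultimately have "\<exists>y. 0 \<le> y \<and> y < int q \<and> [x * y = 1] (mod int q)"
    by blast
  then show ?thesis
    unfolding modinv_def by (rule someI2_ex) blast
qed

lemma cong_inverse_unique:
  fixes x y z :: int
  assumes "[x * y = 1] (mod q)" "[x * z = 1] (mod q)"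
  shows "[y = z] (mod q)"
proof -
  have "[y * (x * z) = y * 1] (mod q)"
    using assms(2) by (intro cong_mult cong_refl)
  moreover have "[(x * y) * z = 1 * z] (mod q)"
    using assms(1) by (intro cong_mult cong_refl)
  ultimately show ?thesis
    by (simp add: mult_ac cong_def)
qed

lemma modinv_uminus_cong:
  assumes q: "q > 0" and x: "coprime x (int q)"
  shows "[modinv q ((- x) mod int q) = - modinv q x] (mod int q)"
proof (rule cong_inverse_unique)
  show "[(- x) mod int q * modinv q ((- x) mod int q) = 1] (mod int q)"
    using q x by (intro modinv_cong) simp_all
  have "[(- x) mod int q * - modinv q x = (- x) * - modinv q x] (mod int q)"
    by (intro cong_mult cong_refl) (simp add: cong_def)
  then show "[(- x) mod int q * - modinv q x = 1] (mod int q)"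
    using modinv_cong[OF q x] by (simp add: cong_trans)
qed

lemma finite_units_mod: "finite (units_mod c)"
  by (rule finite_subset[of _ "{0..<int c}"]) (auto simp: units_mod_def)

lemma kloosterman_cong_left:
  assumes "q > 0" "[a = a'] (mod int q)"
  shows "kloosterman a b q = kloosterman a' b q"
  unfolding kloosterman_def
proof (rule sum.cong[OF refl])
  fix x
  have "[a * x + b * modinv q x = a' * x + b * modinv q x] (mod int q)"
    using assms(2) by (intro cong_add cong_mult cong_refl)
  then show "ee (real_of_int (a * x + b * modinv q x) / real q) =
             ee (real_of_int (a' * x + b * modinv q x) / real q)"
    using assms(1) by (rule ee_cong[rotated])
qed

lemma kloosterman_uminus:
  assumes q: "q > 0"
  shows "kloosterman (- a) (- b) q = kloosterman a b q"
proof -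
  have units: "(- x) mod int q \<in> units_mod q" "(- ((- x) mod int q)) mod int q = x"
    if "x \<in> units_mod q" for x
    using q that by (simp_all add: units_mod_def mod_minus_eq)
  have terms: "ee (real_of_int (a * ((- x) mod int q) + b * modinv q ((- x) mod int q)) / real q) =
               ee (real_of_int (- a * x + - b * modinv q x) / real q)"
    if "x \<in> units_mod q" for x
  proof (rule ee_cong[OF q])
    have "[a * ((- x) mod int q) + b * modinv q ((- x) mod int q) = a * (- x) + b * (- modinv q x)] (mod int q)"
      using q that by (intro cong_add cong_mult cong_refl modinv_uminus_cong) (simp_all add: cong_def units_mod_def)
    then show "[a * ((- x) mod int q) + b * modinv q ((- x) mod int q) = - a * x + - b * modinv q x] (mod int q)"
      by simp
  qed
  show ?thesis
    unfolding kloosterman_def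
    by (rule sum.reindex_bij_witness[where i="\<lambda>x. (- x) mod int q" and j="\<lambda>x. (- x) mod int q"])
      (auto simp del: of_int_add of_int_mult of_int_minus simp: units terms)
qed

lemma kloosterman_sign:
  assumes "q > 0" "s \<in> {1, -1}"
  shows "kloosterman (- s * a) b q = kloosterman a (- s * b) q"
  using assms kloosterman_uminus[OF assms(1), of a "- b"] by auto

lemma norm_kloosterman_le: "norm (kloosterman a b q) \<le> real q"
proof -
  have "norm (kloosterman a b q) \<le> (\<Sum>x\<in>units_mod q. norm (ee (real_of_int (a * x + b * modinv q x) / real q)))"
    unfolding kloosterman_def by (rule norm_sum)
  also have "\<dots> = real (card (units_mod q))"
    by simp
  also have "\<dots> \<le> real (card {0..<int q})"
    by (intro of_nat_mono card_mono) (auto simp: units_mod_def)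
  finally show ?thesis
    by simp
qed

lemma dvd_unit_mult_add_iff:
  fixes s c d m :: int
  assumes "s * s = 1"
  shows "c dvd s * d + m \<longleftrightarrow> c dvd d + s * m"
proof -
  have "s * (s * d + m) = d + s * m" "s * (d + s * m) = s * d + m"
    using assms by (simp_all add: algebra_simps)
  then show ?thesis
    by (metis dvd_mult)
qed

lemma sum_units_mod_congruent:
  assumes c: "c > 0" and s: "s \<in> {1, -1}"
  shows "(\<Sum>d\<in>units_mod c. if int c dvd s * d + int m then z else 0) = (if coprime m c then z else 0)"
proof -
  define r where "r = (- s * int m) mod int c"
  have "int c dvd s * d + int m \<longleftrightarrow> d = r" if "d \<in> units_mod c" for d
  proof -
    have "s * s = 1"
      using s by auto
    then have "int c dvd s * d + int m \<longleftrightarrow> [d = - s * int m] (mod int c)"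
      by (simp add: dvd_unit_mult_add_iff cong_iff_dvd_diff)
    also have "\<dots> \<longleftrightarrow> d = r"
      using that by (simp add: cong_def r_def units_mod_def)
    finally show ?thesis .
  qed
  then have "(\<Sum>d\<in>units_mod c. if int c dvd s * d + int m then z else 0) =
             (\<Sum>d\<in>units_mod c. if d = r then z else 0)"
    by (intro sum.cong) auto
  also have "\<dots> = (if r \<in> units_mod c then z else 0)"
    by (simp add: finite_units_mod)
  also have "r \<in> units_mod c \<longleftrightarrow> coprime m c"
    using c s by (auto simp: units_mod_def r_def)
  finally show ?thesis .
qed

lemma has_sum_Xi:
  assumes c: "c > 0" and w: "Re w < 0"
  shows "((\<lambda>m::nat. if int c dvd s * d + int m then cpow (real c) (1 - w) / cpow (real m) (1 - w) else 0)
           has_sum Xi c s d w) {1..}"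
proof -
  define e where "e b = ee (real_of_int (s * int b * d) / real c)" for b :: nat
  define g where "g b m = ee (real (b * m) / real c) / cpow (real m) (1 - w)" for b m :: nat
  have "(g b has_sum infsum (g b) {1..}) {1..}" for b
    unfolding g_def by (rule has_sum_infsum, rule summable_on_div_cpow[OF w, where C = 1]) simp
  then have "((\<lambda>m. \<Sum>b<c. e b * g b m) has_sum (\<Sum>b<c. e b * infsum (g b) {1..})) {1..}"
    by (intro has_sum_sum has_sum_cmult_right) auto
  then have "((\<lambda>m. cpow (real c) (- w) * (\<Sum>b<c. e b * g b m)) has_sum Xi c s d w) {1..}"
    unfolding Xi_def e_def g_def by (rule has_sum_cmult_right)
  moreover have "cpow (real c) (- w) * (\<Sum>b<c. e b * g b m) =
      (if int c dvd s * d + int m then cpow (real c) (1 - w) / cpow (real m) (1 - w) else 0)" for m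
  proof -
    have "e b * g b m = ee (real_of_int (int b * (s * d + int m)) / real c) / cpow (real m) (1 - w)" for b
    proof -
      have "real_of_int (int b * (s * d + int m)) / real c =
            real_of_int (s * int b * d) / real c + real (b * m) / real c"
        using c by (simp add: field_simps)
      then show ?thesis
        unfolding e_def g_def by (simp add: ee_add)
    qed
    then have "(\<Sum>b<c. e b * g b m) =
        (\<Sum>b<c. ee (real_of_int (int b * (s * d + int m)) / real c)) / cpow (real m) (1 - w)"
      by (simp only: sum_divide_distrib)
    also have "\<dots> = (if int c dvd s * d + int m then of_nat c else 0) / cpow (real m) (1 - w)"
      by (simp only: sum_ee_orthogonality[OF c])
    moreover have "cpow (real c) (- w) * of_nat c = cpow (real c) (1 - w)"
      using cpow_add_one[of "real c" "- w"] c by simp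
    ultimately show ?thesis
      by auto
  qed
  ultimately show ?thesis
    by simp
qed

definition kloosterman_term ::
    "(nat \<Rightarrow> nat \<Rightarrow> complex) \<Rightarrow> nat \<Rightarrow> complex \<Rightarrow> complex \<Rightarrow> int \<Rightarrow> nat \<Rightarrow> nat \<Rightarrow> nat \<Rightarrow> complex" where
  "kloosterman_term A l w1 w2 \<sigma> n1 m n2 = A n2 n1 /
     (cpow (real m) (1 - w1) * cpow (real n2) (1 - w2) * cpow (real n1) (1 - 2 * w2)) *
     kloosterman (int m) (\<sigma> * int n2) (l div n1)"

definition kloosterman_series ::
    "(nat \<Rightarrow> nat \<Rightarrow> complex) \<Rightarrow> nat \<Rightarrow> complex \<Rightarrow> complex \<Rightarrow> int \<Rightarrow> nat \<Rightarrow> complex" where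
  "kloosterman_series A l w1 w2 \<sigma> m =
     (\<Sum>n1 | n1 dvd l. infsum (kloosterman_term A l w1 w2 \<sigma> n1 m) {1..})"

lemma norm_kloosterman_term_le:
  assumes "m \<ge> 1" "n2 \<ge> 1" "n1 \<ge> 1" "Re w2 < 0"
  shows "norm (kloosterman_term A l w1 w2 \<sigma> n1 m n2) \<le>
     real l * real m powr (Re w1 - 1) * (norm (A n2 n1) / real n2 powr (1 - Re w2))"
proof -
  define Kn where "Kn = norm (kloosterman (int m) (\<sigma> * int n2) (l div n1))"
  have "Kn \<le> real (l div n1)"
    unfolding Kn_def by (rule norm_kloosterman_le)
  also have "\<dots> \<le> real l"
    by simp
  also have "\<dots> \<le> real l * real n1 powr (1 - 2 * Re w2)"
    using assms ge_one_powr_ge_zero[of "real n1" "1 - 2 * Re w2"] by (simp add: mult_le_cancel_left1)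
  finally have Kn: "Kn / real n1 powr (1 - 2 * Re w2) \<le> real l"
    using assms by (simp add: divide_le_eq)
  have "norm (kloosterman_term A l w1 w2 \<sigma> n1 m n2) =
      real m powr (Re w1 - 1) * (norm (A n2 n1) / real n2 powr (1 - Re w2)) * (Kn / real n1 powr (1 - 2 * Re w2))"
    using assms powr_minus[of "real m" "1 - Re w1"]
    by (simp add: kloosterman_term_def Kn_def norm_mult norm_divide norm_cpow field_simps)
  also have "\<dots> \<le> real m powr (Re w1 - 1) * (norm (A n2 n1) / real n2 powr (1 - Re w2)) * real l"
    using Kn by (rule mult_left_mono) simp
  finally show ?thesis
    by (simp only: ac_simps)
qed

lemma summable_on_kloosterman_term:
  assumes A: "summable (\<lambda>n2. norm (A n2 n1) / real n2 powr (1 - Re w2))"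
    and n1: "n1 \<ge> 1" and w1: "Re w1 < 0" and w2: "Re w2 < 0"
  shows "(\<lambda>(m, n2). kloosterman_term A l w1 w2 \<sigma> n1 m n2) summable_on ({1..} \<times> {1..})"
proof (rule summable_on_norm_bound)
  have "(\<lambda>m::nat. real l * real m powr (Re w1 - 1)) summable_on {1..}"
    using summable_on_powr_nat[of "1 - Re w1" "real l"] w1 by simp
  moreover have "(\<lambda>n2. norm (A n2 n1) / real n2 powr (1 - Re w2)) summable_on UNIV"
    using A by (intro norm_summable_imp_summable_on) simp
  then have "(\<lambda>n2. norm (A n2 n1) / real n2 powr (1 - Re w2)) summable_on {1..}"
    by (rule summable_on_subset_banach) simp
  ultimately show "(\<lambda>(m, n2). real l * real m powr (Re w1 - 1) * (norm (A n2 n1) / real n2 powr (1 - Re w2)))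
      summable_on ({1..} \<times> {1..})"
    by (rule summable_on_product_nonneg) simp_all
  fix x :: "nat \<times> nat"
  assume "x \<in> {1..} \<times> {1..}"
  then show "norm ((\<lambda>(m, n2). kloosterman_term A l w1 w2 \<sigma> n1 m n2) x) \<le>
      (\<lambda>(m, n2). real l * real m powr (Re w1 - 1) * (norm (A n2 n1) / real n2 powr (1 - Re w2))) x"
    using norm_kloosterman_term_le[OF _ _ n1 w2] by (cases x) simp
qed

lemma has_sum_kloosterman_series:
  assumes A: "\<And>n1. n1 dvd l \<Longrightarrow> summable (\<lambda>n2. norm (A n2 n1) / real n2 powr (1 - Re w2))"
    and l: "l \<ge> 1" and w1: "Re w1 < 0" and w2: "Re w2 < 0"
  shows "(kloosterman_series A l w1 w2 \<sigma> has_sum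
           (\<Sum>n1 | n1 dvd l. infsum (\<lambda>(m, n2). kloosterman_term A l w1 w2 \<sigma> n1 m n2) ({1..} \<times> {1..}))) {1..}"
proof -
  have "((\<lambda>m. infsum (kloosterman_term A l w1 w2 \<sigma> n1 m) {1..}) has_sum
          infsum (\<lambda>(m, n2). kloosterman_term A l w1 w2 \<sigma> n1 m n2) ({1..} \<times> {1..})) {1..}"
    if "n1 dvd l" for n1
  proof -
    have "n1 \<ge> 1"
      using that l by (cases n1) auto
    with A[OF that] w1 w2 have summable:
      "(\<lambda>(m, n2). kloosterman_term A l w1 w2 \<sigma> n1 m n2) summable_on ({1..} \<times> {1..})"
      by (intro summable_on_kloosterman_term)
    show ?thesis
      using has_sum_infsum[OF summable_on_Sigma_banach[OF summable]]
      by (simp only: infsum_Sigma'_banach[OF summable])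
  qed
  then show ?thesis
    unfolding kloosterman_series_def[abs_def] using l by (intro has_sum_sum) auto
qed

section \<open>Decomposition along the divisors of \<open>l\<close>\<close>

lemma image_mult_coprime_eq_gcd:
  fixes c k l :: nat
  assumes l: "c * k = l" and k: "k \<ge> 1"
  shows "(\<lambda>m. m * k) ` {m. m \<ge> 1 \<and> coprime m c} = {M. M \<ge> 1 \<and> gcd M l = k}"
proof (intro equalityI subsetI)
  fix M
  assume "M \<in> (\<lambda>m. m * k) ` {m. m \<ge> 1 \<and> coprime m c}"
  then obtain m where m: "m \<ge> 1" "coprime m c" "M = m * k"
    by blast
  have "gcd M l = gcd (k * m) (k * c)"
    unfolding m(3) l[symmetric] by (simp only: mult.commute)
  also have "\<dots> = k * gcd m c"
    by (rule gcd_mult_distrib_nat[symmetric])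
  also have "\<dots> = k"
    using m(2) by simp
  finally show "M \<in> {M. M \<ge> 1 \<and> gcd M l = k}"
    using m k by simp
next
  fix M
  assume "M \<in> {M. M \<ge> 1 \<and> gcd M l = k}"
  then have M: "M \<ge> 1" "gcd M l = k"
    by auto
  have "k dvd M"
    using gcd_dvd1[of M l] unfolding M(2) .
  then obtain m where m: "M = k * m"
    by blast
  have "k * gcd m c = gcd (k * m) (k * c)"
    by (rule gcd_mult_distrib_nat)
  also have "\<dots> = k"
    using M(2) unfolding m l[symmetric] by (simp only: mult.commute)
  finally have "gcd m c = 1"
    using k by simp
  then have "coprime m c"
    by (rule coprime_iff_gcd_eq_1[THEN iffD2])
  moreover have "m \<ge> 1"
    using M(1) m by (cases "m = 0") simp_all
  moreover have "M = m * k"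
    using m by (simp only: mult.commute)
  ultimately show "M \<in> (\<lambda>m. m * k) ` {m. m \<ge> 1 \<and> coprime m c}"
    by (intro image_eqI[where x = m]) simp_all
qed

lemma sum_divisors_gcd_delta:
  fixes l M :: nat
  assumes "l \<ge> 1"
  shows "(\<Sum>c | c dvd l. if gcd M l = l div c then z else 0) = z"
proof -
  define g where "g = gcd M l"
  have g: "g dvd l" "g > 0"
    using assms by (auto simp: g_def)
  then obtain h where h: "l = g * h"
    by blast
  have "h > 0"
    using h assms by (cases "h = 0") simp_all
  have "gcd M l = l div c \<longleftrightarrow> c = h" if "c dvd l" for c
  proof
    assume "gcd M l = l div c"
    then have "l = c * g"
      using that by (metis g_def dvd_mult_div_cancel)
    then show "c = h"
      using g h by (simp add: mult.commute)
  next
    assume "c = h"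
    moreover have "l div h = g"
      using h \<open>h > 0\<close> by simp
    ultimately show "gcd M l = l div c"
      by (simp add: g_def)
  qed
  then have "(\<Sum>c | c dvd l. if gcd M l = l div c then z else 0) = (\<Sum>c | c dvd l. if c = h then z else 0)"
    by (intro sum.cong) auto
  also have "\<dots> = z"
    using h assms by simp
  finally show ?thesis .
qed

lemma has_sum_divisor_decomposition:
  fixes H :: "nat \<Rightarrow> 'a::topological_comm_monoid_add"
  assumes l: "l \<ge> 1"
    and S: "\<And>c. c dvd l \<Longrightarrow> ((\<lambda>m. if coprime m c then H (m * (l div c)) else 0) has_sum S c) {1..}"
  shows "(H has_sum (\<Sum>c | c dvd l. S c)) {1..}"
proof -
  have "((\<lambda>M. if gcd M l = l div c then H M else 0) has_sum S c) {1..}" if c: "c dvd l" for c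
  proof -
    define k where "k = l div c"
    have ck: "c * k = l" "k \<ge> 1"
      using c l by (auto simp: k_def intro: Nat.gr0I)
    have "((\<lambda>m. H (m * k)) has_sum S c) {m. m \<ge> 1 \<and> coprime m c}"
      using S[OF c] unfolding k_def[symmetric] by (rule has_sum_cong_neutral[THEN iffD1, rotated -1]) auto
    then have "(H has_sum S c) ((\<lambda>m. m * k) ` {m. m \<ge> 1 \<and> coprime m c})"
      using ck by (subst has_sum_reindex) (auto simp: inj_on_def o_def)
    then have "(H has_sum S c) {M. M \<ge> 1 \<and> gcd M l = k}"
      by (simp only: image_mult_coprime_eq_gcd[OF ck])
    then show ?thesis
      unfolding k_def by (rule has_sum_cong_neutral[THEN iffD1, rotated -1]) auto
  qed
  then have "((\<lambda>M. \<Sum>c | c dvd l. if gcd M l = l div c then H M else 0) has_sum (\<Sum>c | c dvd l. S c)) {1..}"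
    using l by (intro has_sum_sum) auto
  then show ?thesis
    using l by (simp only: sum_divisors_gcd_delta)
qed

lemma kloosterman_congruent_shift:
  assumes c: "c > 0" "k > 0" and s1: "s1 \<in> {1, -1}" and cd: "int c dvd s1 * d + int m"
    and n1: "n1 dvd c * k"
  shows "kloosterman (d * int k) (s2 * int n2) (c * k div n1) =
         kloosterman (int (m * k)) (- s1 * s2 * int n2) (c * k div n1)"
proof -
  define q where "q = c * k div n1"
  have "n1 > 0" "n1 \<le> c * k"
    using n1 c by (auto intro: Nat.gr0I dvd_imp_le)
  then have "q > 0"
    by (simp add: q_def div_greater_zero_iff)
  have "q dvd c * k"
    unfolding q_def using n1 by (metis dvd_mult_div_cancel dvd_triv_right)
  have "s1 * s1 = 1"
    using s1 by auto
  then have "int c dvd d + s1 * int m"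
    using cd by (simp add: dvd_unit_mult_add_iff)
  then have "int c * int k dvd (d + s1 * int m) * int k"
    by (rule mult_dvd_mono) simp
  moreover have "int q dvd int c * int k"
    using \<open>q dvd c * k\<close> by (simp flip: of_nat_mult)
  ultimately have "int q dvd (d + s1 * int m) * int k"
    by (rule dvd_trans[rotated])
  then have "int q dvd d * int k - (- s1 * int (m * k))"
    by (simp add: algebra_simps)
  then have "[d * int k = - s1 * int (m * k)] (mod int q)"
    by (simp add: cong_iff_dvd_diff)
  then have "kloosterman (d * int k) (s2 * int n2) q = kloosterman (- s1 * int (m * k)) (s2 * int n2) q"
    by (rule kloosterman_cong_left[OF \<open>q > 0\<close>])
  also have "\<dots> = kloosterman (int (m * k)) (- s1 * s2 * int n2) q"
    using kloosterman_sign[OF \<open>q > 0\<close> s1] by (simp add: mult.assoc)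
  finally show ?thesis
    unfolding q_def .
qed

lemma XiF_eq_kloosterman_series:
  assumes c: "c > 0" "k > 0" and s1: "s1 \<in> {1, -1}" and m: "m \<ge> 1" and cd: "int c dvd s1 * d + int m"
  shows "cpow (real c) (2 * w2 - 1) * (cpow (real c) (1 - w1) / cpow (real m) (1 - w1)) * XiF A c s2 d k w2
       = cpow (real (c * k)) (1 - w1 - w2) * kloosterman_series A (c * k) w1 w2 (- s1 * s2) (m * k)"
proof -
  define X where "X = cpow (real c) (2 * w2 - 1) * (cpow (real c) (1 - w1) / cpow (real m) (1 - w1)) * of_nat c"
  have "X * (A n2 n1 / of_nat (n2 * n1) * kloosterman (d * int k) (s2 * int n2) (c * k div n1) *
          cpow (real (n2 * n1 ^ 2) / real (c ^ 3 * k)) w2)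
      = cpow (real (c * k)) (1 - w1 - w2) * kloosterman_term A (c * k) w1 w2 (- s1 * s2) n1 (m * k) n2"
    if n1: "n1 dvd c * k" and n2: "n2 \<ge> 1" for n1 n2
  proof -
    define a where "a = A n2 n1 * kloosterman (int (m * k)) (- s1 * s2 * int n2) (c * k div n1)"
    have "n1 > 0"
      using n1 c by (auto intro: Nat.gr0I)
    then have "cpow (real c) (2 * w2 - 1) * (cpow (real c) (1 - w1) / cpow (real m) (1 - w1)) * of_real (real c) *
           (a / of_real (real n2 * real n1) * cpow (real n2 * real n1 ^ 2 / (real c ^ 3 * real k)) w2)
        = cpow (real c * real k) (1 - w1 - w2) *
           (a / (cpow (real m * real k) (1 - w1) * cpow (real n2) (1 - w2) * cpow (real n1) (1 - 2 * w2)))"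
      using c m n2 by (intro cpow_monomial_identity) simp_all
    then show ?thesis
      using kloosterman_congruent_shift[OF c s1 cd n1]
      by (simp add: X_def a_def kloosterman_term_def ac_simps)
  qed
  then have "X * (\<Sum>n1 | n1 dvd c * k. infsum (\<lambda>n2. A n2 n1 / of_nat (n2 * n1) *
                kloosterman (d * int k) (s2 * int n2) (c * k div n1) *
                cpow (real (n2 * n1 ^ 2) / real (c ^ 3 * k)) w2) {1..})
      = (\<Sum>n1 | n1 dvd c * k. infsum (\<lambda>n2. cpow (real (c * k)) (1 - w1 - w2) *
                kloosterman_term A (c * k) w1 w2 (- s1 * s2) n1 (m * k) n2) {1..})"
    unfolding sum_distrib_left infsum_cmult_right'[symmetric] by (intro sum.cong refl infsum_cong) auto
  also have "\<dots> = cpow (real (c * k)) (1 - w1 - w2) *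
          (\<Sum>n1 | n1 dvd c * k. infsum (kloosterman_term A (c * k) w1 w2 (- s1 * s2) n1 (m * k)) {1..})"
    by (simp only: sum_distrib_left infsum_cmult_right')
  finally show ?thesis
    unfolding XiF_def kloosterman_series_def X_def by (simp only: ac_simps)
qed

lemma has_sum_Xi_mul_XiF:
  assumes c: "c > 0" "k > 0" and s1: "s1 \<in> {1, -1}" and w1: "Re w1 < 0"
  shows "((\<lambda>m. if int c dvd s1 * d + int m then
              cpow (real (c * k)) (1 - w1 - w2) * kloosterman_series A (c * k) w1 w2 (- s1 * s2) (m * k)
            else 0)
          has_sum cpow (real c) (2 * w2 - 1) * (Xi c s1 d w1 * XiF A c s2 d k w2)) {1..}"
proof -
  have "((\<lambda>m. cpow (real c) (2 * w2 - 1) *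
            (if int c dvd s1 * d + int m then cpow (real c) (1 - w1) / cpow (real m) (1 - w1) else 0) *
            XiF A c s2 d k w2)
          has_sum cpow (real c) (2 * w2 - 1) * Xi c s1 d w1 * XiF A c s2 d k w2) {1..}"
    by (intro has_sum_cmult_left has_sum_cmult_right has_sum_Xi c w1)
  then show ?thesis
    unfolding mult.assoc[symmetric]
    by (rule has_sum_cong[THEN iffD1, rotated]) (use c s1 XiF_eq_kloosterman_series in \<open>auto simp: mult.assoc\<close>)
qed

lemma has_sum_sum_units_Xi_mul_XiF:
  assumes c: "c > 0" "k > 0" and s1: "s1 \<in> {1, -1}" and w1: "Re w1 < 0"
  shows "((\<lambda>m. if coprime m c then
              cpow (real (c * k)) (1 - w1 - w2) * kloosterman_series A (c * k) w1 w2 (- s1 * s2) (m * k)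
            else 0)
          has_sum cpow (real c) (2 * w2 - 1) * (\<Sum>d\<in>units_mod c. Xi c s1 d w1 * XiF A c s2 d k w2)) {1..}"
proof -
  have "((\<lambda>m. \<Sum>d\<in>units_mod c. if int c dvd s1 * d + int m then
              cpow (real (c * k)) (1 - w1 - w2) * kloosterman_series A (c * k) w1 w2 (- s1 * s2) (m * k)
            else 0)
          has_sum (\<Sum>d\<in>units_mod c. cpow (real c) (2 * w2 - 1) * (Xi c s1 d w1 * XiF A c s2 d k w2))) {1..}"
    by (intro has_sum_sum finite_units_mod has_sum_Xi_mul_XiF c s1 w1)
  then show ?thesis
    by (simp only: sum_units_mod_congruent[OF c(1) s1] sum_distrib_left)
qed

theorem mainTheorem5:
  fixes A :: "nat \<Rightarrow> nat \<Rightarrow> complex"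
    and l :: nat and w1 w2 :: complex and s1 s2 :: int
  assumes A_abs: "\<And>n1 \<sigma>. n1 \<ge> 1 \<Longrightarrow> \<sigma> > 1 \<Longrightarrow>
             summable (\<lambda>n2. norm (A n2 n1) / real n2 powr \<sigma>)"
    and l: "l \<ge> 1"
    and u1: "Re w1 < 0" and u2: "Re w2 < 0"
    and s1: "s1 \<in> {1, -1}" and s2: "s2 \<in> {1, -1}"
  shows "(\<Sum>c | c dvd l. cpow (real c) (2 * w2 - 1) *
            (\<Sum>d\<in>units_mod c. Xi c s1 d w1 * XiF A c s2 d (l div c) w2))
       = cpow (real l) (1 - w1 - w2) *
         (\<Sum>n1 | n1 dvd l.
            infsum (\<lambda>(m, n2). A n2 n1 /
                 (cpow (real m) (1 - w1) * cpow (real n2) (1 - w2) * cpow (real n1) (1 - 2 * w2)) *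
                 kloosterman (int m) (- s1 * s2 * int n2) (l div n1))
              ({1..} \<times> {1..}))"
proof -
  define H where "H M = cpow (real l) (1 - w1 - w2) * kloosterman_series A l w1 w2 (- s1 * s2) M" for M
  have "(H has_sum (\<Sum>c | c dvd l. cpow (real c) (2 * w2 - 1) *
            (\<Sum>d\<in>units_mod c. Xi c s1 d w1 * XiF A c s2 d (l div c) w2))) {1..}"
  proof (rule has_sum_divisor_decomposition[OF l])
    fix c
    assume "c dvd l"
    then have c: "c > 0" "l div c > 0" and l_eq: "c * (l div c) = l"
      using l by (auto intro: Nat.gr0I)
    show "((\<lambda>m. if coprime m c then H (m * (l div c)) else 0) has_sum cpow (real c) (2 * w2 - 1) *
            (\<Sum>d\<in>units_mod c. Xi c s1 d w1 * XiF A c s2 d (l div c) w2)) {1..}"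
      using has_sum_sum_units_Xi_mul_XiF[OF c s1 u1, of w2 A s2] unfolding H_def l_eq .
  qed
  moreover have "(H has_sum cpow (real l) (1 - w1 - w2) *
      (\<Sum>n1 | n1 dvd l. infsum (\<lambda>(m, n2). kloosterman_term A l w1 w2 (- s1 * s2) n1 m n2) ({1..} \<times> {1..}))) {1..}"
    unfolding H_def using A_abs l u1 u2 by (intro has_sum_cmult_right has_sum_kloosterman_series) auto
  ultimately show ?thesis
    unfolding kloosterman_term_def by (rule has_sum_unique)
qed

end
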